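(* Let $m\in\mathbb{N}$ and $w>0$, and let $(n_k)_{k=1}^\infty$ be the increasing sequence of all $n\in\mathbb{N}$ with $(\varphi\circ\eta_w)(n)=m$. Then $(n_k)_{k=1}^\infty$ is a completely deterministic sequence.
   Context: $\mathbb{N}=\{1,2,\ldots\}$. Define $L_w(1):=1$ and $L_w(n):=\lceil w(L_w(1)+\cdots+L_w(n-1))\rceil$ for $n\ge2$. Let $\beta_n:=\max\{k: k(k+1)/2\le n\}$, $\varphi(n):=n-\beta_n(\beta_n+1)/2$, and $\eta_w(n):=\max\{k:\sum_{j=1}^k L_w(j)\le n\}$. The indicator sequence of an increasing sequence $(n_k)\subset\mathbb{N}$ is $(\omega_n)_{n\ge1}\in\{0,1\}^{\mathbb{N}}$ with $\omega_n=1$ iff $n=n_k$ for some $k$. A binary sequence $(\omega_n)$ is completely deterministic if for every $\varepsilon>0$ there is $K\in\mathbb{N}$ such that, after removing from $(\omega_n)$ a set of positions of density less than $\varepsilon$, what remains can be covered by $K$-blocks (words of length $K$) taken from a collection $\mathcal{C}$ with $|\mathcal{C}|<2^{\varepsilon K}$. An increasing sequence of positive integers is completely deterministic if its indicator sequence is. *)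

theory Defs
  imports Complex_Main "HOL-Library.Extended_Real"
begin

text \<open>L_w(n) for n >= 1 (the value at 0 is an irrelevant 0):
  L_w(1) = 1, L_w(n) = ceiling (w * (L_w(1) + ... + L_w(n-1))).\<close>
fun L_w :: "real \<Rightarrow> nat \<Rightarrow> nat" where
  "L_w w 0 = 0"
| "L_w w (Suc n) =
     (if n = 0 then 1 else nat \<lceil>w * (\<Sum>j\<in>{1..n}. real (L_w w j))\<rceil>)"

definition beta :: "nat \<Rightarrow> nat" where
  "beta n = Max {k::nat. k * (k + 1) div 2 \<le> n}"

definition phi :: "nat \<Rightarrow> nat" where
  "phi n = n - beta n * (beta n + 1) div 2"

definition eta_w :: "real \<Rightarrow> nat \<Rightarrow> nat" where
  "eta_w w n = Max {k::nat. (\<Sum>j\<in>{1..k}. L_w w j) \<le> n}"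

definition upper_density :: "nat set \<Rightarrow> ereal" where
  "upper_density S = limsup (\<lambda>n. ereal (real (card (S \<inter> {1..n})) / real n))"

definition completely_deterministic :: "(nat \<Rightarrow> bool) \<Rightarrow> bool" where
  "completely_deterministic \<omega> \<longleftrightarrow>
     (\<forall>\<epsilon>::real. \<epsilon> > 0 \<longrightarrow>
        (\<exists>K::nat. K \<ge> 1 \<and>
          (\<exists>S C A.
             S \<subseteq> {1..} \<and> upper_density S < ereal \<epsilon> \<and>
             finite C \<and> (\<forall>c\<in>C. length c = K) \<and>
             real (card C) < 2 powr (\<epsilon> * real K) \<and>
             A \<subseteq> {1..} \<and>
             (\<forall>a\<in>A. \<forall>b\<in>A. a \<noteq> b \<longrightarrow> {a..<a+K} \<inter> {b..<b+K} = {}) \<and>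
             {1..} - S \<subseteq> (\<Union>a\<in>A. {a..<a+K}) \<and>
             (\<forall>a\<in>A. map \<omega> [a..<a+K] \<in> C))))"

definition completely_deterministic_seq :: "(nat \<Rightarrow> nat) \<Rightarrow> bool" where
  "completely_deterministic_seq nk \<longleftrightarrow> completely_deterministic (\<lambda>n. n \<in> range nk)"

end

theory Submission
  imports Defs
begin

(* The indicator of the sequence is n \<mapsto> P (eta_w w n) with P k = (phi k = m), and eta_w w is
   a nondecreasing step function whose k-th step has length L_w w (k + 1) \<ge> w k, which grows
   without bound. Hence, beyond a finite prefix of density 0, every block of K consecutive
   positions meets at most two steps, so its word has the form b^t c^(K - t). There are at most
   4 (K + 1) such words, fewer than 2^(\<epsilon> K) once K is large. *)

lemma upper_density_finite:
  assumes "finite S"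
  shows "upper_density S = 0"
proof -
  let ?r = "\<lambda>n. real (card (S \<inter> {1..n})) / real n"
  have "?r \<longlonglongrightarrow> 0"
  proof (rule tendsto_sandwich[OF _ _ tendsto_const lim_const_over_n])
    show "\<forall>\<^sub>F n in sequentially. 0 \<le> ?r n" by simp
    have "card (S \<inter> {1..n}) \<le> card S" for n
      using assms by (intro card_mono) auto
    then show "\<forall>\<^sub>F n in sequentially. ?r n \<le> real (card S) / real n"
      by (intro always_eventually allI divide_right_mono) auto
  qed
  then have "limsup (\<lambda>n. ereal (?r n)) = ereal 0"
    by (intro lim_imp_Limsup tendsto_ereal) simp_all
  then show ?thesis
    unfolding upper_density_def by (simp add: zero_ereal_def)
qed

lemma progression_blocks_disjoint:
  fixes N K i j :: nat
  assumes "i \<noteq> j"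
  shows "{N + i * K..<N + i * K + K} \<inter> {N + j * K..<N + j * K + K} = {}"
proof -
  have "i * K + K \<le> j * K" if "i < j" for i j
    using mult_le_mono1[of "Suc i" j K] that by simp
  with assms show ?thesis
    by (cases i j rule: linorder_cases) auto
qed

lemma progression_blocks_cover:
  fixes N K n :: nat
  assumes "K \<ge> 1" "N \<le> n"
  shows "\<exists>j. n \<in> {N + j * K..<N + j * K + K}"
proof
  let ?j = "(n - N) div K"
  have "n - N = ?j * K + (n - N) mod K" by simp
  moreover have "(n - N) mod K < K" using assms(1) by simp
  ultimately show "n \<in> {N + ?j * K..<N + ?j * K + K}"
    unfolding atLeastLessThan_iff using assms(2) by linarith
qed

lemma completely_deterministic_if_few_windows:
  assumes "\<And>\<epsilon>. \<epsilon> > 0 \<Longrightarrow> \<exists>K\<ge>1. \<exists>C N. finite C \<and> (\<forall>c\<in>C. length c = K) \<and>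
             real (card C) < 2 powr (\<epsilon> * real K) \<and> (\<forall>a\<ge>N. map \<omega> [a..<a+K] \<in> C)"
  shows "completely_deterministic \<omega>"
  unfolding completely_deterministic_def
proof (intro allI impI)
  fix \<epsilon> :: real
  assume "\<epsilon> > 0"
  from assms[OF this] obtain K C N where K: "K \<ge> 1" and C: "finite C" "\<forall>c\<in>C. length c = K"
      "real (card C) < 2 powr (\<epsilon> * real K)" and windows: "\<forall>a\<ge>N. map \<omega> [a..<a+K] \<in> C"
    by blast
  define S where "S = {1..N}"
  define A where "A = range (\<lambda>j. Suc N + j * K)"
  have S: "S \<subseteq> {1..}" "upper_density S < ereal \<epsilon>"
    unfolding S_def using upper_density_finite \<open>\<epsilon> > 0\<close> by auto
  have A: "A \<subseteq> {1..}" unfolding A_def by auto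
  have disjoint: "\<forall>a\<in>A. \<forall>b\<in>A. a \<noteq> b \<longrightarrow> {a..<a+K} \<inter> {b..<b+K} = {}"
  proof (intro ballI impI)
    fix a b assume "a \<in> A" "b \<in> A" "a \<noteq> b"
    then obtain i j where "a = Suc N + i * K" "b = Suc N + j * K" "i \<noteq> j"
      unfolding A_def by auto
    then show "{a..<a+K} \<inter> {b..<b+K} = {}"
      by (simp only:) (rule progression_blocks_disjoint)
  qed
  have cover: "{1..} - S \<subseteq> (\<Union>a\<in>A. {a..<a+K})"
  proof
    fix n assume "n \<in> {1..} - S"
    then have "Suc N \<le> n" unfolding S_def by auto
    then obtain j where "n \<in> {Suc N + j * K..<Suc N + j * K + K}"
      using progression_blocks_cover[OF K] by blast
    then show "n \<in> (\<Union>a\<in>A. {a..<a+K})" unfolding A_def by blast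
  qed
  have blocks: "\<forall>a\<in>A. map \<omega> [a..<a+K] \<in> C"
  proof
    fix a assume "a \<in> A"
    then have "N \<le> a" unfolding A_def by auto
    with windows show "map \<omega> [a..<a+K] \<in> C" by blast
  qed
  show "\<exists>K\<ge>1. \<exists>S C A. S \<subseteq> {1..} \<and> upper_density S < ereal \<epsilon> \<and>
      finite C \<and> (\<forall>c\<in>C. length c = K) \<and> real (card C) < 2 powr (\<epsilon> * real K) \<and>
      A \<subseteq> {1..} \<and> (\<forall>a\<in>A. \<forall>b\<in>A. a \<noteq> b \<longrightarrow> {a..<a+K} \<inter> {b..<b+K} = {}) \<and>
      {1..} - S \<subseteq> (\<Union>a\<in>A. {a..<a+K}) \<and> (\<forall>a\<in>A. map \<omega> [a..<a+K] \<in> C)"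
    by (intro exI[of _ K] exI[of _ S] exI[of _ C] exI[of _ A] conjI K S C A disjoint cover blocks)
qed

lemma ex_linear_less_powr:
  fixes c \<epsilon> :: real
  assumes "\<epsilon> > 0"
  shows "\<exists>K::nat. K \<ge> 1 \<and> c * (real K + 1) < 2 powr (\<epsilon> * real K)"
proof -
  define q where "q = 2 powr \<epsilon>"
  have q: "q > 1" unfolding q_def using assms by simp
  have "(\<lambda>n. real (Suc n) / q ^ Suc n) \<longlonglongrightarrow> 0"
    using LIMSEQ_Suc[OF lim_n_over_pown[of q]] q by simp
  then have "(\<lambda>n. (c * q) * (real (Suc n) / q ^ Suc n)) \<longlonglongrightarrow> 0"
    by (rule tendsto_mult_right_zero)
  moreover have "(c * q) * (real (Suc n) / q ^ Suc n) = c * (real n + 1) / q ^ n" for n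
    using q by (simp add: field_simps)
  ultimately have "(\<lambda>n. c * (real n + 1) / q ^ n) \<longlonglongrightarrow> 0" by simp
  then have "\<forall>\<^sub>F K in sequentially. c * (real K + 1) / q ^ K < 1"
    by (rule order_tendstoD) simp
  then obtain K where "K \<ge> 1" "c * (real K + 1) / q ^ K < 1"
    unfolding eventually_sequentially by (metis le_add1 le_add2)
  moreover have "q ^ K > 0" using q by simp
  ultimately have "c * (real K + 1) < q ^ K" by (simp add: divide_less_eq)
  moreover have "2 powr (\<epsilon> * real K) = q ^ K"
    unfolding q_def by (simp add: powr_powr[symmetric] powr_realpow)
  ultimately show ?thesis using \<open>K \<ge> 1\<close> by auto
qed

definition step_word :: "nat \<Rightarrow> nat \<Rightarrow> 'a \<Rightarrow> 'a \<Rightarrow> 'a list" where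
  "step_word K t b c = map (\<lambda>i. if i < t then b else c) [0..<K]"

definition step_words :: "nat \<Rightarrow> 'a list set" where
  "step_words K = (\<lambda>(t, b, c). step_word K t b c) ` ({..K} \<times> UNIV \<times> UNIV)"

lemma length_step_words: "c \<in> step_words K \<Longrightarrow> length c = K"
  unfolding step_words_def step_word_def by auto

lemma finite_step_words: "finite (step_words K :: 'a::finite list set)"
  unfolding step_words_def by simp

lemma card_step_words_le:
  "card (step_words K :: 'a::finite list set) \<le> (K + 1) * card (UNIV :: 'a set) ^ 2"
proof -
  have "card (step_words K :: 'a list set) \<le> card ({..K} \<times> (UNIV :: 'a set) \<times> (UNIV :: 'a set))"
    unfolding step_words_def by (intro card_image_le) simp
  also have "\<dots> = (K + 1) * card (UNIV :: 'a set) ^ 2"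
    by (simp only: card_cartesian_product) (simp add: power2_eq_square)
  finally show ?thesis .
qed

lemma window_in_step_words:
  fixes f :: "nat \<Rightarrow> nat"
  assumes "mono f" "f (a + K) \<le> Suc (f a)"
  shows "map (\<lambda>n. P (f n)) [a..<a+K] \<in> step_words K"
proof -
  define t where "t = (LEAST i. i = K \<or> f (a + i) \<noteq> f a)"
  have "t \<le> K" unfolding t_def by (rule Least_le) simp
  have before: "f (a + i) = f a" if "i < t" for i
    using not_less_Least[OF that[unfolded t_def]] \<open>t \<le> K\<close> that by auto
  have after: "f (a + i) = Suc (f a)" if "t \<le> i" "i < K" for i
  proof -
    have "f (a + t) \<noteq> f a"
      using LeastI[of "\<lambda>i. i = K \<or> f (a + i) \<noteq> f a" K] that unfolding t_def by auto
    moreover have "f a \<le> f (a + t)" "f (a + t) \<le> f (a + i)" "f (a + i) \<le> f (a + K)"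
      using that by (simp_all add: monoD[OF assms(1)])
    ultimately show ?thesis using assms(2) by linarith
  qed
  have "map (\<lambda>n. P (f n)) [a..<a+K] = step_word K t (P (f a)) (P (Suc (f a)))"
    unfolding step_word_def by (rule nth_equalityI) (simp_all add: before after)
  with \<open>t \<le> K\<close> show ?thesis
    unfolding step_words_def by (auto intro!: image_eqI[where x = "(t, P (f a), P (Suc (f a)))"])
qed

lemma completely_deterministic_slowly_growing:
  fixes f :: "nat \<Rightarrow> nat"
  assumes "mono f" "\<And>K. \<exists>N. \<forall>a\<ge>N. f (a + K) \<le> Suc (f a)"
  shows "completely_deterministic (\<lambda>n. P (f n))"
proof (rule completely_deterministic_if_few_windows)
  fix \<epsilon> :: real
  assume "\<epsilon> > 0"
  then obtain K :: nat where "K \<ge> 1" and K: "4 * (real K + 1) < 2 powr (\<epsilon> * real K)"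
    using ex_linear_less_powr by blast
  obtain N where "\<forall>a\<ge>N. f (a + K) \<le> Suc (f a)" using assms(2) by blast
  then have windows: "\<forall>a\<ge>N. map (\<lambda>n. P (f n)) [a..<a+K] \<in> step_words K"
    using window_in_step_words[OF assms(1)] by blast
  have "card (step_words K :: bool list set) \<le> (K + 1) * 4"
    using card_step_words_le[where 'a = bool, of K] by simp
  then have "real (card (step_words K :: bool list set)) \<le> 4 * (real K + 1)"
    using of_nat_mono by fastforce
  with K have card: "real (card (step_words K :: bool list set)) < 2 powr (\<epsilon> * real K)"
    by linarith
  show "\<exists>K\<ge>1. \<exists>C N. finite C \<and> (\<forall>c\<in>C. length c = K) \<and>
      real (card C) < 2 powr (\<epsilon> * real K) \<and> (\<forall>a\<ge>N. map (\<lambda>n. P (f n)) [a..<a+K] \<in> C)"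
    by (intro exI[of _ K] exI[of _ "step_words K"] exI[of _ N] conjI \<open>K \<ge> 1\<close>
        finite_step_words ballI length_step_words card windows)
qed

definition L_w_sum :: "real \<Rightarrow> nat \<Rightarrow> nat" where
  "L_w_sum w k = (\<Sum>j\<in>{1..k}. L_w w j)"

lemma L_w_sum_Suc: "L_w_sum w (Suc k) = L_w_sum w k + L_w w (Suc k)"
  unfolding L_w_sum_def by simp

lemma L_w_Suc: "k \<ge> 1 \<Longrightarrow> L_w w (Suc k) = nat \<lceil>w * real (L_w_sum w k)\<rceil>"
  unfolding L_w_sum_def by simp

lemma mono_L_w_sum: "mono (L_w_sum w)"
  unfolding L_w_sum_def by (intro monoI sum_mono2) auto

lemma L_w_sum_ge:
  assumes "w > 0"
  shows "k \<le> L_w_sum w k"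
proof (induction k)
  case (Suc k)
  have "L_w w (Suc k) \<ge> 1"
  proof (cases "k = 0")
    case False
    with Suc.IH assms have "\<lceil>w * real (L_w_sum w k)\<rceil> \<ge> 1" by simp
    moreover have "L_w w (Suc k) = nat \<lceil>w * real (L_w_sum w k)\<rceil>"
      using False by (intro L_w_Suc) simp
    ultimately show ?thesis by linarith
  qed simp
  with Suc.IH show ?case by (simp add: L_w_sum_Suc)
qed (simp add: L_w_sum_def)

lemma L_w_Suc_ge:
  assumes "w > 0" "k \<ge> 1"
  shows "w * real k \<le> real (L_w w (Suc k))"
proof -
  have "w * real k \<le> w * real (L_w_sum w k)"
    using L_w_sum_ge[OF assms(1)] assms(1) by simp
  also have "\<dots> \<le> real (L_w w (Suc k))"
    using L_w_Suc[OF assms(2), where w = w] by linarith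
  finally show ?thesis .
qed

lemma le_eta_w_iff:
  assumes "w > 0"
  shows "k \<le> eta_w w n \<longleftrightarrow> L_w_sum w k \<le> n"
proof -
  let ?K = "{k. L_w_sum w k \<le> n}"
  have eta: "eta_w w n = Max ?K" unfolding eta_w_def L_w_sum_def ..
  have "k \<le> n" if "k \<in> ?K" for k
    using L_w_sum_ge[OF assms, of k] that by simp
  then have "finite ?K" by (meson finite_atMost finite_subset atMost_iff subsetI)
  moreover have "0 \<in> ?K" by (simp add: L_w_sum_def)
  ultimately have max: "L_w_sum w (eta_w w n) \<le> n"
    unfolding eta using Max_in by blast
  show ?thesis
  proof
    assume "k \<le> eta_w w n"
    then have "L_w_sum w k \<le> L_w_sum w (eta_w w n)" by (rule monoD[OF mono_L_w_sum])
    with max show "L_w_sum w k \<le> n" by simp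
  next
    assume "L_w_sum w k \<le> n"
    with \<open>finite ?K\<close> show "k \<le> eta_w w n" unfolding eta by simp
  qed
qed

lemma mono_eta_w:
  assumes "w > 0"
  shows "mono (eta_w w)"
proof (rule monoI)
  fix n n' :: nat assume "n \<le> n'"
  moreover have "L_w_sum w (eta_w w n) \<le> n" using le_eta_w_iff[OF assms] by blast
  ultimately show "eta_w w n \<le> eta_w w n'" using le_eta_w_iff[OF assms] by simp
qed

lemma eta_w_0: "w > 0 \<Longrightarrow> eta_w w 0 = 0"
  using le_eta_w_iff[of w 1 0] by (simp add: L_w_sum_def)

lemma eta_w_add_le:
  assumes "w > 0"
  shows "\<exists>N. \<forall>a\<ge>N. eta_w w (a + K) \<le> Suc (eta_w w a)"
proof -
  obtain k0 :: nat where "real K / w \<le> real k0" by (meson real_arch_simple)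
  then have k0: "real K \<le> w * real k0" using assms by (simp add: field_simps)
  have "\<forall>a\<ge>L_w_sum w k0. eta_w w (a + K) \<le> Suc (eta_w w a)"
  proof (intro allI impI)
    fix a assume "L_w_sum w k0 \<le> a"
    define e where "e = eta_w w a"
    have "k0 \<le> e" using le_eta_w_iff[OF assms] \<open>L_w_sum w k0 \<le> a\<close> by (simp add: e_def)
    have "a < L_w_sum w (Suc e)" using le_eta_w_iff[OF assms, of "Suc e" a] by (simp add: e_def)
    note k0
    also have "w * real k0 \<le> w * real (Suc e)"
      using \<open>k0 \<le> e\<close> assms by (intro mult_left_mono) simp_all
    also have "\<dots> \<le> real (L_w w (Suc (Suc e)))" by (rule L_w_Suc_ge[OF assms]) simp
    finally have "a + K < L_w_sum w (Suc (Suc e))"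
      using \<open>a < L_w_sum w (Suc e)\<close> L_w_sum_Suc[of w "Suc e"] by linarith
    then show "eta_w w (a + K) \<le> Suc e"
      using le_eta_w_iff[OF assms, of "Suc (Suc e)" "a + K"] by simp
  qed
  then show ?thesis by blast
qed

theorem lemma4:
  fixes m :: nat and w :: real and nk :: "nat \<Rightarrow> nat"
  assumes "m \<ge> 1" and "w > 0"
    and "strict_mono nk"
    and "range nk = {n. n \<ge> 1 \<and> phi (eta_w w n) = m}"
  shows "completely_deterministic_seq nk"
proof -
  have "phi (eta_w w 0) \<noteq> m"
    using assms(1) eta_w_0[OF assms(2)] by (simp add: phi_def)
  then have "n \<in> range nk \<longleftrightarrow> phi (eta_w w n) = m" for n
    using assms(4) by (cases "n = 0") auto
  moreover have "completely_deterministic (\<lambda>n. phi (eta_w w n) = m)"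
    using assms(2) by (intro completely_deterministic_slowly_growing mono_eta_w eta_w_add_le)
  ultimately show ?thesis
    unfolding completely_deterministic_seq_def by simp
qed

end
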